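(* For every $p\ge1$ there exists $C_p>0$, independent of $t$, such that for all $t\in[0,T]$ and $\mathbf{x}=(a,\epsilon,q),\mathbf{x}'=(a',\epsilon',q')\in\mathcal{O}$, $$\mathbb{E}_t\Big[\sup_{r\in[t,T]}\big|S_r^{t,\mathbf{x}}-S_r^{t,\mathbf{x}'}\big|^p\Big]\le C_pe^{p|\epsilon'|}\Big(|a-a'|^p+a^p\big|e^{\epsilon-\epsilon'}-1\big|^p\Big).$$
   Context: $T>0$; $W^1,W^2$ are independent standard Brownian motions; $\mu_1,\sigma_1,k,\sigma_2>0$, $\rho\in[-1,1]$, $0<\bar Q_0<\infty$, $\mathcal{O}=(0,\infty)\times\mathbb{R}\times[0,\bar Q_0)$. For $\mathbf{x}=(a,\epsilon,q)$, $(A^{t,\mathbf{x}}_r,\varepsilon^{t,\mathbf{x}}_r)_{r\in[t,T]}$ solve $dA_r=\mu_1A_rdr+\sigma_1A_rdW^1_r$, $d\varepsilon_r=-k\varepsilon_rdr+\sigma_2(\rho dW^1_r+\sqrt{1-\rho^2}dW^2_r)$, $(A_t,\varepsilon_t)=(a,\epsilon)$, both driven by the same Brownian motions for $\mathbf{x}$ and $\mathbf{x}'$; $S^{t,\mathbf{x}}_r=A^{t,\mathbf{x}}_re^{\varepsilon^{t,\mathbf{x}}_r}$; $\mathbb{E}_t$ is expectation given the initial conditions at time $t$. *)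

theory Defs
  imports "HOL-Probability.Probability"
begin

definition std_BM :: "'a measure \<Rightarrow> real \<Rightarrow> (real \<Rightarrow> 'a \<Rightarrow> real) \<Rightarrow> bool" where
  "std_BM M T W \<longleftrightarrow>
     prob_space M \<and>
     (\<forall>t\<in>{0..T}. W t \<in> borel_measurable M) \<and>
     (\<forall>\<omega>\<in>space M. W 0 \<omega> = 0 \<and> continuous_on {0..T} (\<lambda>t. W t \<omega>)) \<and>
     (\<forall>s t. 0 \<le> s \<and> s < t \<and> t \<le> T \<longrightarrow>
        distributed M lborel (\<lambda>\<omega>. W t \<omega> - W s \<omega>) (normal_density 0 (sqrt (t - s)))) \<and>
     (\<forall>(n::nat) (u::nat \<Rightarrow> real). u 0 \<ge> 0 \<and> u n \<le> T \<and> (\<forall>i<n. u i < u (Suc i)) \<longrightarrow>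
        prob_space.indep_vars M (\<lambda>_. borel) (\<lambda>i \<omega>. W (u (Suc i)) \<omega> - W (u i) \<omega>) {..<n})"

definition proc_sigma :: "'a measure \<Rightarrow> real \<Rightarrow> (real \<Rightarrow> 'a \<Rightarrow> real) \<Rightarrow> 'a set set" where
  "proc_sigma M T W = sigma_sets (space M)
     (\<Union>t\<in>{0..T}. {W t -` A \<inter> space M | A. A \<in> sets borel})"

definition indep_BMs :: "'a measure \<Rightarrow> real \<Rightarrow> (real \<Rightarrow> 'a \<Rightarrow> real) \<Rightarrow> (real \<Rightarrow> 'a \<Rightarrow> real) \<Rightarrow> bool" where
  "indep_BMs M T W1 W2 \<longleftrightarrow> std_BM M T W1 \<and> std_BM M T W2 \<and>
     prob_space.indep_set M (proc_sigma M T W1) (proc_sigma M T W2)"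

text \<open>Unique strong solution of dA = mu1 A dr + sig1 A dW1, A_t = a (geometric BM).\<close>
definition A_proc :: "real \<Rightarrow> real \<Rightarrow> (real \<Rightarrow> 'a \<Rightarrow> real) \<Rightarrow> real \<Rightarrow> real \<Rightarrow> real \<Rightarrow> 'a \<Rightarrow> real" where
  "A_proc mu1 sig1 W1 t a r \<omega> =
     a * exp ((mu1 - sig1^2 / 2) * (r - t) + sig1 * (W1 r \<omega> - W1 t \<omega>))"

text \<open>Unique strong solution of the OU equation d eps = -k eps dr + sig2 dB, eps_t = e, with
  B = rho W1 + sqrt(1-rho^2) W2, written pathwise: the Wiener integral
  int_t^r exp(-k(r-s)) dB_s equals (B_r - B_t) - k int_t^r exp(-k(r-s)) (B_s - B_t) ds.\<close>
definition eps_proc :: "real \<Rightarrow> real \<Rightarrow> real \<Rightarrow> (real \<Rightarrow> 'a \<Rightarrow> real) \<Rightarrow> (real \<Rightarrow> 'a \<Rightarrow> real)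
     \<Rightarrow> real \<Rightarrow> real \<Rightarrow> real \<Rightarrow> 'a \<Rightarrow> real" where
  "eps_proc k sig2 rho W1 W2 t e r \<omega> =
     (let B = (\<lambda>s. rho * W1 s \<omega> + sqrt (1 - rho^2) * W2 s \<omega>) in
      e * exp (- k * (r - t)) +
      sig2 * ((B r - B t) - k * integral {t..r} (\<lambda>s. exp (- k * (r - s)) * (B s - B t))))"

definition S_proc :: "real \<Rightarrow> real \<Rightarrow> real \<Rightarrow> real \<Rightarrow> real \<Rightarrow> (real \<Rightarrow> 'a \<Rightarrow> real) \<Rightarrow> (real \<Rightarrow> 'a \<Rightarrow> real)
     \<Rightarrow> real \<Rightarrow> real \<Rightarrow> real \<Rightarrow> real \<Rightarrow> 'a \<Rightarrow> real" where
  "S_proc mu1 sig1 k sig2 rho W1 W2 t a e r \<omega> =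
     A_proc mu1 sig1 W1 t a r \<omega> * exp (eps_proc k sig2 rho W1 W2 t e r \<omega>)"

definition domO :: "real \<Rightarrow> (real \<times> real \<times> real) set" where
  "domO Q0 = {(a, e, q). 0 < a \<and> 0 \<le> q \<and> q < Q0}"

end

theory Submission
  imports Defs
begin

(* Both solutions are driven by the same noise, so S_r = a exp (e exp (-k (r - t)) + Y_r) with a
   random exponent Y_r common to x and x'.  Elementary algebra bounds the difference by
   e^|e'| (|a - a'| + a |e^(e - e') - 1|) e^(Y_r), and Y_r <= c0 + c1 (X1 + X2), where Xi is the
   running maximum of |Wi_s - Wi_t| over [t, T].  It therefore suffices that exp (mu Xi) has an
   expectation bounded uniformly in t.  On a finite grid this follows from Doob's maximal
   inequality for the exponential martingale of W and a layer-cake summation; Fatou's lemma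
   along dyadic grids passes to the continuum. *)

section \<open>Exponential moments of Gaussian increments\<close>

lemma normal_density_mult_exp:
  fixes s c x :: real
  assumes "s > 0"
  shows "normal_density 0 s x * exp (c * x) = exp (c^2 * s^2 / 2) * normal_density (c * s^2) s x"
proof -
  have "- (x - 0)\<^sup>2 / (2 * s\<^sup>2) + c * x = c^2 * s^2 / 2 + (- (x - c * s\<^sup>2)\<^sup>2 / (2 * s\<^sup>2))"
    using assms by (simp add: field_simps power2_eq_square)
  then have "exp (- (x - 0)\<^sup>2 / (2 * s\<^sup>2)) * exp (c * x)
      = exp (c^2 * s^2 / 2) * exp (- (x - c * s\<^sup>2)\<^sup>2 / (2 * s\<^sup>2))"
    by (metis exp_add)
  then show ?thesis
    unfolding normal_density_def by (simp add: mult_ac)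
qed

lemma nn_integral_exp_normal:
  fixes X :: "'a \<Rightarrow> real"
  assumes "distributed M lborel X (normal_density 0 s)" "s > 0"
  shows "(\<integral>\<^sup>+\<omega>. ennreal (exp (c * X \<omega>)) \<partial>M) = ennreal (exp (c^2 * s^2 / 2))"
proof -
  have "(\<integral>\<^sup>+\<omega>. ennreal (exp (c * X \<omega>)) \<partial>M)
      = (\<integral>\<^sup>+x. ennreal (normal_density 0 s x) * ennreal (exp (c * x)) \<partial>lborel)"
    by (rule distributed_nn_integral[OF assms(1), symmetric]) measurable
  also have "\<dots> = (\<integral>\<^sup>+x. ennreal (exp (c^2 * s^2 / 2)) * ennreal (normal_density (c * s^2) s x) \<partial>lborel)"
    by (intro nn_integral_cong) (simp add: ennreal_mult[symmetric] normal_density_mult_exp[OF assms(2)])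
  also have "\<dots> = ennreal (exp (c^2 * s^2 / 2))"
    by (subst nn_integral_cmult) (auto simp: nn_integral_eq_integral assms)
  finally show ?thesis .
qed

lemma std_BM_prob_space: "std_BM M T W \<Longrightarrow> prob_space M"
  unfolding std_BM_def by blast

lemma std_BM_borel_measurable:
  "std_BM M T W \<Longrightarrow> 0 \<le> t \<Longrightarrow> t \<le> T \<Longrightarrow> W t \<in> borel_measurable M"
  unfolding std_BM_def by auto

lemma std_BM_nn_integral_exp_increment:
  assumes "std_BM M T W" "0 \<le> s" "s < t" "t \<le> T"
  shows "(\<integral>\<^sup>+\<omega>. ennreal (exp (c * (W t \<omega> - W s \<omega>))) \<partial>M) = ennreal (exp (c^2 * (t - s) / 2))"
proof -
  have "distributed M lborel (\<lambda>\<omega>. W t \<omega> - W s \<omega>) (normal_density 0 (sqrt (t - s)))"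
    using assms unfolding std_BM_def by auto
  from nn_integral_exp_normal[OF this, of c] show ?thesis
    using assms by simp
qed

lemma (in prob_space) indep_var_nn_integral:
  fixes X Y :: "'a \<Rightarrow> ennreal"
  assumes "indep_var borel X borel Y"
  shows "(\<integral>\<^sup>+\<omega>. X \<omega> * Y \<omega> \<partial>M) = (\<integral>\<^sup>+\<omega>. X \<omega> \<partial>M) * (\<integral>\<^sup>+\<omega>. Y \<omega> \<partial>M)"
proof -
  have "case_bool borel borel = (\<lambda>_::bool. (borel :: ennreal measure))"
    by (simp add: fun_eq_iff split: bool.split)
  with assms have "indep_vars (\<lambda>_. borel) (case_bool X Y) UNIV"
    unfolding indep_var_def by simp
  from indep_vars_nn_integral[OF _ this] show ?thesis
    by (simp add: UNIV_bool mult.commute)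
qed

lemma std_BM_nn_integral_mult_exp_increment:
  fixes F :: "(nat \<Rightarrow> real) \<Rightarrow> ennreal"
  assumes BM: "std_BM M T W" and u: "strict_mono_on {..N} u" "0 \<le> u 0" "u N \<le> T"
    and k: "k < N" and F: "F \<in> borel_measurable (PiM {..<k} (\<lambda>_. borel))"
  shows "(\<integral>\<^sup>+\<omega>. F (\<lambda>i\<in>{..<k}. W (u (Suc i)) \<omega> - W (u i) \<omega>) * ennreal (exp (c * (W (u N) \<omega> - W (u k) \<omega>))) \<partial>M)
    = (\<integral>\<^sup>+\<omega>. F (\<lambda>i\<in>{..<k}. W (u (Suc i)) \<omega> - W (u i) \<omega>) \<partial>M) * ennreal (exp (c^2 * (u N - u k) / 2))"
proof -
  interpret prob_space M using BM by (rule std_BM_prob_space)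
  define v where "v i = (if i \<le> k then u i else u N)" for i
  define X where "X i \<omega> = W (v (Suc i)) \<omega> - W (v i) \<omega>" for i \<omega>
  define G where "G f = ennreal (exp (c * f k))" for f :: "nat \<Rightarrow> real"
  have "v i < v (Suc i)" if "i < Suc k" for i
    using that k by (auto simp: v_def intro!: strict_mono_onD[OF u(1)])
  moreover have "0 \<le> v 0" "v (Suc k) \<le> T"
    using u by (auto simp: v_def)
  ultimately have "indep_vars (\<lambda>_. borel) X {..<Suc k}"
    using BM unfolding std_BM_def X_def by blast
  from indep_var_restrict[OF this, of "{..<k}" "{k}"]
  have "indep_var (PiM {..<k} (\<lambda>_. borel)) (\<lambda>\<omega>. \<lambda>i\<in>{..<k}. X i \<omega>) (PiM {k} (\<lambda>_. borel)) (\<lambda>\<omega>. \<lambda>i\<in>{k}. X i \<omega>)"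
    by auto
  from indep_var_compose[OF this F, of G borel]
  have "indep_var borel (\<lambda>\<omega>. F (\<lambda>i\<in>{..<k}. X i \<omega>)) borel (\<lambda>\<omega>. G (\<lambda>i\<in>{k}. X i \<omega>))"
    unfolding G_def by (simp add: comp_def)
  moreover have "(\<lambda>i\<in>{..<k}. X i \<omega>) = (\<lambda>i\<in>{..<k}. W (u (Suc i)) \<omega> - W (u i) \<omega>)" for \<omega>
    by (auto simp: X_def v_def)
  moreover have "G (\<lambda>i\<in>{k}. X i \<omega>) = ennreal (exp (c * (W (u N) \<omega> - W (u k) \<omega>)))" for \<omega>
    by (simp add: G_def X_def v_def)
  ultimately have "(\<integral>\<^sup>+\<omega>. F (\<lambda>i\<in>{..<k}. W (u (Suc i)) \<omega> - W (u i) \<omega>) * ennreal (exp (c * (W (u N) \<omega> - W (u k) \<omega>))) \<partial>M)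
    = (\<integral>\<^sup>+\<omega>. F (\<lambda>i\<in>{..<k}. W (u (Suc i)) \<omega> - W (u i) \<omega>) \<partial>M) * (\<integral>\<^sup>+\<omega>. ennreal (exp (c * (W (u N) \<omega> - W (u k) \<omega>))) \<partial>M)"
    by (simp add: indep_var_nn_integral)
  also have "(\<integral>\<^sup>+\<omega>. ennreal (exp (c * (W (u N) \<omega> - W (u k) \<omega>))) \<partial>M) = ennreal (exp (c^2 * (u N - u k) / 2))"
    using u k by (intro std_BM_nn_integral_exp_increment[OF BM])
      (auto intro: strict_mono_onD[OF u(1)] order.trans[OF _ strict_mono_on_leD[OF u(1)]])
  finally show ?thesis .
qed

section \<open>Maximal inequality for exponentials of Brownian motion on finite grids\<close>

definition first_passage :: "(nat \<Rightarrow> 'a \<Rightarrow> real) \<Rightarrow> real \<Rightarrow> nat \<Rightarrow> 'a set" where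
  "first_passage S x k = {\<omega>. x \<le> S k \<omega> \<and> (\<forall>j<k. S j \<omega> < x)}"

lemma disjoint_family_first_passage: "disjoint_family (first_passage S x)"
  unfolding disjoint_family_on_def
proof (intro ballI impI)
  fix m n :: nat assume "m \<noteq> n"
  then consider "m < n" | "n < m" by linarith
  then show "first_passage S x m \<inter> first_passage S x n = {}"
    by cases (auto simp: first_passage_def)
qed

lemma first_passage_exists:
  assumes "x \<le> Max ((\<lambda>j. S j \<omega>) ` {..N})"
  obtains k where "k \<le> N" "\<omega> \<in> first_passage S x k"
proof -
  have "Max ((\<lambda>j. S j \<omega>) ` {..N}) \<in> (\<lambda>j. S j \<omega>) ` {..N}"
    by (rule Max_in) auto
  then obtain j where "j \<le> N" "Max ((\<lambda>j. S j \<omega>) ` {..N}) = S j \<omega>"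
    by blast
  with assms have j: "j \<le> N" "x \<le> S j \<omega>"
    by auto
  define k where "k = (LEAST k. x \<le> S k \<omega>)"
  have "k \<le> j" "x \<le> S k \<omega>"
    unfolding k_def using j(2) by (fact Least_le, fact LeastI)
  moreover have "S i \<omega> < x" if "i < k" for i
    using not_less_Least[OF that[unfolded k_def]] by simp
  ultimately show thesis
    using j by (intro that[of k]) (auto simp: first_passage_def)
qed

(* Doob's argument: step is the submartingale property of exp (lam S) tested on first-passage events. *)
lemma (in prob_space) exp_maximal_inequality:
  assumes S: "\<And>j. j \<le> N \<Longrightarrow> S j \<in> borel_measurable M" and lam: "0 \<le> lam"
    and step: "\<And>k. k < N \<Longrightarrow>
      (\<integral>\<^sup>+\<omega>. ennreal (exp (lam * S k \<omega>)) * indicator (first_passage S x k) \<omega> \<partial>M)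
        \<le> (\<integral>\<^sup>+\<omega>. ennreal (exp (lam * S N \<omega>)) * indicator (first_passage S x k) \<omega> \<partial>M)"
  shows "ennreal (exp (lam * x)) * emeasure M {\<omega>\<in>space M. x \<le> Max ((\<lambda>j. S j \<omega>) ` {..N})}
    \<le> (\<integral>\<^sup>+\<omega>. ennreal (exp (lam * S N \<omega>)) \<partial>M)"
proof -
  let ?A = "first_passage S x"
  have A: "?A k \<inter> space M \<in> sets M" if "k \<le> N" for k
  proof -
    have "Measurable.pred M (\<lambda>\<omega>. x \<le> S k \<omega> \<and> (\<forall>j\<in>{..<k}. S j \<omega> < x))"
      using that S by (intro pred_intros_logic pred_intros_finite) auto
    then show ?thesis
      by (simp add: first_passage_def pred_def Int_def conj_commute lessThan_def)
  qed
  have "(indicator (?A k) :: 'a \<Rightarrow> ennreal) \<in> borel_measurable M" if "k \<le> N" for k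
    using A[OF that] by (simp add: borel_measurable_indicator_iff)
  then have meas: "(\<lambda>\<omega>. ennreal (exp (lam * S j \<omega>)) * indicator (?A k) \<omega>) \<in> borel_measurable M"
    if "j \<le> N" "k \<le> N" for j k
    using that S by measurable
  have cover: "ennreal (exp (lam * x)) * indicator {\<omega>\<in>space M. x \<le> Max ((\<lambda>j. S j \<omega>) ` {..N})} \<omega>
      \<le> (\<Sum>k\<le>N. ennreal (exp (lam * S k \<omega>)) * indicator (?A k) \<omega>)" for \<omega>
  proof (cases "\<omega> \<in> space M \<and> x \<le> Max ((\<lambda>j. S j \<omega>) ` {..N})")
    case True
    then obtain k where k: "k \<le> N" "\<omega> \<in> ?A k"
      using first_passage_exists[of x S \<omega> N] by blast
    then have "x \<le> S k \<omega>"
      by (simp add: first_passage_def)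
    then have "ennreal (exp (lam * x)) \<le> ennreal (exp (lam * S k \<omega>)) * indicator (?A k) \<omega>"
      using k(2) lam by (simp add: mult_left_mono)
    also have "\<dots> \<le> (\<Sum>k\<le>N. ennreal (exp (lam * S k \<omega>)) * indicator (?A k) \<omega>)"
      using k by (intro member_le_sum) auto
    finally show ?thesis
      using True by simp
  qed simp
  have packing: "(\<Sum>k\<le>N. ennreal (exp (lam * S N \<omega>)) * indicator (?A k) \<omega>) \<le> ennreal (exp (lam * S N \<omega>))" for \<omega>
  proof -
    have "(\<Sum>k\<le>N. indicator (?A k) \<omega> :: ennreal) = indicator (\<Union>k\<le>N. ?A k) \<omega>"
      using disjoint_family_on_mono[OF subset_UNIV disjoint_family_first_passage]
      by (intro indicator_UN_disjoint[symmetric]) simp_all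
    also have "\<dots> \<le> 1"
      by (simp add: indicator_def)
    finally show ?thesis
      by (simp add: sum_distrib_left[symmetric] mult_left_le)
  qed
  have "(\<lambda>\<omega>. Max ((\<lambda>j. S j \<omega>) ` {..N})) \<in> borel_measurable M"
    using S by (intro borel_measurable_Max) auto
  from measurable_sets[OF this, of "{x..}"]
  have "{\<omega>\<in>space M. x \<le> Max ((\<lambda>j. S j \<omega>) ` {..N})} \<in> sets M"
    by (simp add: vimage_def Int_def conj_commute)
  then have "ennreal (exp (lam * x)) * emeasure M {\<omega>\<in>space M. x \<le> Max ((\<lambda>j. S j \<omega>) ` {..N})}
      = (\<integral>\<^sup>+\<omega>. ennreal (exp (lam * x)) * indicator {\<omega>\<in>space M. x \<le> Max ((\<lambda>j. S j \<omega>) ` {..N})} \<omega> \<partial>M)"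
    by (rule nn_integral_cmult_indicator[symmetric])
  also have "\<dots> \<le> (\<integral>\<^sup>+\<omega>. (\<Sum>k\<le>N. ennreal (exp (lam * S k \<omega>)) * indicator (?A k) \<omega>) \<partial>M)"
    by (intro nn_integral_mono cover)
  also have "\<dots> = (\<Sum>k\<le>N. \<integral>\<^sup>+\<omega>. ennreal (exp (lam * S k \<omega>)) * indicator (?A k) \<omega> \<partial>M)"
    using meas by (intro nn_integral_sum) auto
  also have "\<dots> \<le> (\<Sum>k\<le>N. \<integral>\<^sup>+\<omega>. ennreal (exp (lam * S N \<omega>)) * indicator (?A k) \<omega> \<partial>M)"
  proof (rule sum_mono)
    fix k assume "k \<in> {..N}"
    then consider "k < N" | "k = N" by fastforce
    then show "(\<integral>\<^sup>+\<omega>. ennreal (exp (lam * S k \<omega>)) * indicator (?A k) \<omega> \<partial>M)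
        \<le> (\<integral>\<^sup>+\<omega>. ennreal (exp (lam * S N \<omega>)) * indicator (?A k) \<omega> \<partial>M)"
      by cases (simp_all add: step)
  qed
  also have "\<dots> = (\<integral>\<^sup>+\<omega>. (\<Sum>k\<le>N. ennreal (exp (lam * S N \<omega>)) * indicator (?A k) \<omega>) \<partial>M)"
    using meas by (intro nn_integral_sum[symmetric]) auto
  also have "\<dots> \<le> (\<integral>\<^sup>+\<omega>. ennreal (exp (lam * S N \<omega>)) \<partial>M)"
    by (intro nn_integral_mono packing)
  finally show ?thesis .
qed

(* Also for i outside K, where f i = undefined on the extensional product space. *)
lemma borel_measurable_PiM_component:
  "(\<lambda>f. f i) \<in> borel_measurable (PiM K (\<lambda>_. (borel :: real measure)))"
proof (cases "i \<in> K")
  case True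
  then show ?thesis by (rule measurable_component_singleton)
next
  case False
  show ?thesis
    by (rule measurable_cong[where f="\<lambda>_. undefined", THEN iffD1])
      (use False in \<open>auto simp: space_PiM PiE_def extensional_def\<close>)
qed

lemma std_BM_grid_max_tail:
  fixes W :: "real \<Rightarrow> 'a \<Rightarrow> real" and u :: "nat \<Rightarrow> real"
  assumes BM: "std_BM M T W" and sg: "sg = 1 \<or> sg = -1" and lam: "0 \<le> lam"
    and u: "strict_mono_on {..N} u" "0 \<le> u 0" "u N \<le> T" and N: "0 < N"
  shows "emeasure M {\<omega>\<in>space M. x \<le> Max ((\<lambda>j. sg * (W (u j) \<omega> - W (u 0) \<omega>)) ` {..N})}
    \<le> ennreal (exp (- lam * x) * exp (lam^2 * (u N - u 0) / 2))"
proof -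
  interpret prob_space M
    using BM by (rule std_BM_prob_space)
  define S where "S j \<omega> = sg * (W (u j) \<omega> - W (u 0) \<omega>)" for j \<omega>
  have sg2: "(lam * sg)^2 = lam^2"
    using sg by auto
  have u_mono: "u i \<le> u j" if "i \<le> j" "j \<le> N" for i j
    using that by (intro strict_mono_on_leD[OF u(1)]) auto
  have W: "W (u j) \<in> borel_measurable M" if "j \<le> N" for j
    using u u_mono[of 0 j] u_mono[of j N] that by (intro std_BM_borel_measurable[OF BM]) auto
  have S: "S j \<in> borel_measurable M" if "j \<le> N" for j
    unfolding S_def using W[OF that] W[of 0] by measurable
  have step: "(\<integral>\<^sup>+\<omega>. ennreal (exp (lam * S k \<omega>)) * indicator (first_passage S x k) \<omega> \<partial>M)
      \<le> (\<integral>\<^sup>+\<omega>. ennreal (exp (lam * S N \<omega>)) * indicator (first_passage S x k) \<omega> \<partial>M)"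
    if k: "k < N" for k
  proof -
    \<comment> \<open>F reads the first-passage event off the increments before u k, which are
      independent of the increment from u k to u N.\<close>
    let ?past = "\<lambda>\<omega>. \<lambda>i\<in>{..<k}. W (u (Suc i)) \<omega> - W (u i) \<omega>"
    define F where "F f = (if x \<le> sg * (\<Sum>i<k. f i) \<and> (\<forall>j\<in>{..<k}. sg * (\<Sum>i<j. f i) < x)
      then ennreal (exp (lam * (sg * (\<Sum>i<k. f i)))) else 0)" for f :: "nat \<Rightarrow> real"
    have F_meas: "F \<in> borel_measurable (PiM {..<k} (\<lambda>_. borel))"
      unfolding F_def by (measurable; (intro borel_measurable_PiM_component)?)
    have "sg * (\<Sum>i<j. ?past \<omega> i) = S j \<omega>" if "j \<le> k" for j \<omega>
    proof -
      have "(\<Sum>i<j. ?past \<omega> i) = (\<Sum>i<j. W (u (Suc i)) \<omega> - W (u i) \<omega>)"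
        using that by (intro sum.cong) auto
      then show ?thesis
        using sum_lessThan_telescope[of "\<lambda>i. W (u i) \<omega>" j] by (simp add: S_def)
    qed
    then have F_past: "F (?past \<omega>) = ennreal (exp (lam * S k \<omega>)) * indicator (first_passage S x k) \<omega>" for \<omega>
      by (auto simp: F_def first_passage_def indicator_def)
    have "exp (lam * S k \<omega>) * exp (lam * sg * (W (u N) \<omega> - W (u k) \<omega>)) = exp (lam * S N \<omega>)" for \<omega>
      by (simp add: S_def exp_add[symmetric] algebra_simps)
    then have F_past_increment: "F (?past \<omega>) * ennreal (exp (lam * sg * (W (u N) \<omega> - W (u k) \<omega>)))
        = ennreal (exp (lam * S N \<omega>)) * indicator (first_passage S x k) \<omega>" for \<omega>
      by (simp add: F_past indicator_def ennreal_mult[symmetric])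
    have "1 \<le> ennreal (exp ((lam * sg)^2 * (u N - u k) / 2))"
      using u_mono[of k N] k sg2 by simp
    from mult_left_mono[OF this, of "\<integral>\<^sup>+\<omega>. F (?past \<omega>) \<partial>M"]
    have "(\<integral>\<^sup>+\<omega>. F (?past \<omega>) \<partial>M)
        \<le> (\<integral>\<^sup>+\<omega>. F (?past \<omega>) \<partial>M) * ennreal (exp ((lam * sg)^2 * (u N - u k) / 2))"
      by simp
    also have "\<dots> = (\<integral>\<^sup>+\<omega>. F (?past \<omega>) * ennreal (exp (lam * sg * (W (u N) \<omega> - W (u k) \<omega>))) \<partial>M)"
      by (rule std_BM_nn_integral_mult_exp_increment[OF BM u k F_meas, symmetric])
    also have "\<dots> = (\<integral>\<^sup>+\<omega>. ennreal (exp (lam * S N \<omega>)) * indicator (first_passage S x k) \<omega> \<partial>M)"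
      by (simp only: F_past_increment)
    finally show ?thesis
      by (simp only: F_past)
  qed
  have "ennreal (exp (lam * x)) * emeasure M {\<omega>\<in>space M. x \<le> Max ((\<lambda>j. S j \<omega>) ` {..N})}
      \<le> (\<integral>\<^sup>+\<omega>. ennreal (exp (lam * S N \<omega>)) \<partial>M)"
    by (rule exp_maximal_inequality[OF S lam step]) auto
  also have "\<dots> = ennreal (exp (lam^2 * (u N - u 0) / 2))"
    using std_BM_nn_integral_exp_increment[OF BM u(2) _ u(3), of "lam * sg"]
      strict_mono_onD[OF u(1), of 0 N] N sg2
    by (simp add: S_def mult.assoc)
  finally have "ennreal (exp (lam * x)) * emeasure M {\<omega>\<in>space M. x \<le> Max ((\<lambda>j. S j \<omega>) ` {..N})}
      \<le> ennreal (exp (lam^2 * (u N - u 0) / 2))" .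
  from mult_left_mono[OF this, of "ennreal (exp (- lam * x))"]
  have "emeasure M {\<omega>\<in>space M. x \<le> Max ((\<lambda>j. S j \<omega>) ` {..N})}
      \<le> ennreal (exp (- lam * x)) * ennreal (exp (lam^2 * (u N - u 0) / 2))"
    by (simp add: mult.assoc[symmetric] ennreal_mult[symmetric] exp_add[symmetric])
  then show ?thesis
    by (simp add: S_def ennreal_mult)
qed

section \<open>Exponential moments of the running maximum of Brownian motion\<close>

lemma nn_integral_exp_le_of_tail:
  fixes Y :: "'a \<Rightarrow> real"
  assumes Y: "Y \<in> borel_measurable M" "\<And>\<omega>. \<omega> \<in> space M \<Longrightarrow> 0 \<le> Y \<omega>"
    and mu: "0 \<le> mu" and C: "0 \<le> C"
    and tail: "\<And>i::nat. emeasure M {\<omega>\<in>space M. real i \<le> Y \<omega>} \<le> ennreal (exp (- (mu + 1) * real i) * C)"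
  shows "(\<integral>\<^sup>+\<omega>. ennreal (exp (mu * Y \<omega>)) \<partial>M) \<le> ennreal (exp mu * C / (1 - exp (-1)))"
proof -
  let ?level = "\<lambda>i::nat. {\<omega>\<in>space M. real i \<le> Y \<omega>}"
  have level: "?level i \<in> sets M" for i
    using Y(1) by measurable
  have layers: "ennreal (exp (mu * Y \<omega>)) \<le> (\<Sum>i. ennreal (exp (mu * (real i + 1))) * indicator (?level i) \<omega>)"
    if "\<omega> \<in> space M" for \<omega>
  proof -
    define i where "i = nat \<lfloor>Y \<omega>\<rfloor>"
    have i: "real i \<le> Y \<omega>" "Y \<omega> < real i + 1"
      using Y(2)[OF that] unfolding i_def by (simp_all add: of_nat_nat)
    then have "ennreal (exp (mu * Y \<omega>)) \<le> ennreal (exp (mu * (real i + 1))) * indicator (?level i) \<omega>"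
      using that mu by (simp add: mult_left_mono)
    also have "\<dots> \<le> (\<Sum>i. ennreal (exp (mu * (real i + 1))) * indicator (?level i) \<omega>)"
      using sum_le_suminf[OF summableI, of "{i}"] by simp
    finally show ?thesis .
  qed
  have geometric: "ennreal (exp (mu * (real i + 1))) * ennreal (exp (- (mu + 1) * real i) * C)
      = ennreal (exp mu * C * exp (-1) ^ i)" for i
    using C by (simp add: ennreal_mult[symmetric] exp_of_nat_mult[symmetric] exp_add[symmetric] algebra_simps)
  have "(\<integral>\<^sup>+\<omega>. ennreal (exp (mu * Y \<omega>)) \<partial>M)
      \<le> (\<integral>\<^sup>+\<omega>. (\<Sum>i. ennreal (exp (mu * (real i + 1))) * indicator (?level i) \<omega>) \<partial>M)"
    by (intro nn_integral_mono layers)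
  also have "\<dots> = (\<Sum>i. ennreal (exp (mu * (real i + 1))) * emeasure M (?level i))"
    using level by (simp add: nn_integral_suminf nn_integral_cmult_indicator)
  also have "\<dots> \<le> (\<Sum>i. ennreal (exp (mu * (real i + 1))) * ennreal (exp (- (mu + 1) * real i) * C))"
    by (intro suminf_le mult_left_mono tail) auto
  also have "\<dots> = (\<Sum>i. ennreal (exp mu * C * exp (-1) ^ i))"
    by (simp only: geometric)
  also have "\<dots> = ennreal (exp mu * C / (1 - exp (-1)))"
    using C by (subst suminf_ennreal2)
      (auto simp: suminf_mult suminf_geometric divide_inverse intro!: summable_mult summable_geometric)
  finally show ?thesis .
qed

(* The layer-cake bound with tail exponent mu + 1, so that the series is geometric with ratio e^-1. *)
definition BM_exp_max_bound :: "real \<Rightarrow> real \<Rightarrow> real" where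
  "BM_exp_max_bound mu T = exp mu * exp ((mu + 1)^2 * T / 2) / (1 - exp (-1))"

lemma BM_exp_max_bound_ge_1:
  assumes "0 \<le> mu" "0 \<le> T"
  shows "1 \<le> BM_exp_max_bound mu T"
proof -
  have "1 \<le> exp mu * exp ((mu + 1)^2 * T / 2)"
    using assms by (intro mult_ge1_I) simp_all
  also have "\<dots> \<le> exp mu * exp ((mu + 1)^2 * T / 2) / (1 - exp (-1))"
    by (simp add: le_divide_eq)
  finally show ?thesis
    unfolding BM_exp_max_bound_def .
qed

lemma std_BM_grid_nn_integral_exp_max:
  fixes W :: "real \<Rightarrow> 'a \<Rightarrow> real" and u :: "nat \<Rightarrow> real"
  assumes BM: "std_BM M T W" and sg: "sg = 1 \<or> sg = -1" and mu: "0 \<le> mu"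
    and u: "strict_mono_on {..N} u" "0 \<le> u 0" "u N \<le> T" and N: "0 < N"
  shows "(\<integral>\<^sup>+\<omega>. ennreal (exp (mu * Max ((\<lambda>j. sg * (W (u j) \<omega> - W (u 0) \<omega>)) ` {..N}))) \<partial>M)
    \<le> ennreal (BM_exp_max_bound mu T)"
proof -
  let ?Y = "\<lambda>\<omega>. Max ((\<lambda>j. sg * (W (u j) \<omega> - W (u 0) \<omega>)) ` {..N})"
  have "W (u j) \<in> borel_measurable M" if "j \<le> N" for j
    using u that strict_mono_on_leD[OF u(1), of 0 j] strict_mono_on_leD[OF u(1), of j N]
    by (intro std_BM_borel_measurable[OF BM]) auto
  then have Y_meas: "?Y \<in> borel_measurable M"
    by (intro borel_measurable_Max) auto
  have Y_nonneg: "0 \<le> ?Y \<omega>" for \<omega>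
    by (rule order.trans[OF _ Max_ge[where x = "sg * (W (u 0) \<omega> - W (u 0) \<omega>)"]]) auto
  have tail: "emeasure M {\<omega>\<in>space M. real i \<le> ?Y \<omega>}
      \<le> ennreal (exp (- (mu + 1) * real i) * exp ((mu + 1)^2 * T / 2))" for i
  proof -
    have "exp ((mu + 1)^2 * (u N - u 0) / 2) \<le> exp ((mu + 1)^2 * T / 2)"
      using u by (simp add: divide_right_mono mult_left_mono)
    then show ?thesis
      using std_BM_grid_max_tail[OF BM sg _ u N, of "mu + 1" "real i"] mu
      by (simp add: ennreal_leI order_trans)
  qed
  show ?thesis
    unfolding BM_exp_max_bound_def
    by (rule nn_integral_exp_le_of_tail[OF Y_meas Y_nonneg mu _ tail]) simp
qed

definition dyadic_point :: "real \<Rightarrow> real \<Rightarrow> nat \<Rightarrow> nat \<Rightarrow> real" where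
  "dyadic_point t T m j = t + (T - t) * real j / 2^m"

lemma strict_mono_on_dyadic_point: "t < T \<Longrightarrow> strict_mono_on A (dyadic_point t T m)"
  by (rule strict_mono_onI) (simp add: dyadic_point_def divide_strict_right_mono)

lemma dyadic_point_in_Icc:
  assumes "t \<le> T" "j \<le> 2^m"
  shows "dyadic_point t T m j \<in> {t..T}"
proof -
  have "real j / 2^m \<le> 1"
    using assms(2) by (simp add: divide_le_eq_1)
  from mult_left_mono[OF this, of "T - t"] show ?thesis
    using assms(1) by (simp add: dyadic_point_def)
qed

lemma dyadic_point_approx:
  assumes "t < T" "s \<in> {t..T}"
  obtains j where "\<And>m. j m \<le> 2^m" "(\<lambda>m. dyadic_point t T m (j m)) \<longlonglongrightarrow> s"
proof
  define j where "j m = nat \<lfloor>(s - t) * 2^m / (T - t)\<rfloor>" for m :: nat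
  have floor: "real (j m) \<le> (s - t) * 2^m / (T - t)" "(s - t) * 2^m / (T - t) < real (j m) + 1" for m
    using assms unfolding j_def by (simp_all add: of_nat_nat)
  have "(s - t) * 2^m / (T - t) \<le> 2^m" for m
    using assms by (simp add: divide_le_eq mult_right_mono)
  with floor(1) show "j m \<le> 2^m" for m
    by (metis of_nat_le_iff of_nat_numeral of_nat_power order.trans)
  have bounds: "s - (T - t) / 2^m \<le> dyadic_point t T m (j m) \<and> dyadic_point t T m (j m) \<le> s" for m
  proof -
    have "real (j m) * (T - t) \<le> (s - t) * 2^m" "(s - t) * 2^m < (real (j m) + 1) * (T - t)"
      using floor[of m] assms by (simp_all only: pos_le_divide_eq pos_divide_less_eq diff_gt_0_iff_gt)
    then have "(T - t) * real (j m) \<le> (s - t) * 2^m" "(s - t) * 2^m \<le> (T - t) * real (j m) + (T - t)"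
      by (simp_all add: algebra_simps)
    then have "(T - t) * real (j m) / 2^m \<le> s - t" "s - t \<le> ((T - t) * real (j m) + (T - t)) / 2^m"
      by (simp_all only: pos_divide_le_eq pos_le_divide_eq zero_less_power zero_less_numeral)
    then show ?thesis
      by (simp add: dyadic_point_def add_divide_distrib)
  qed
  have lim: "(\<lambda>m. s - (T - t) / 2^m) \<longlonglongrightarrow> s"
    by (rule tendsto_eq_intros LIMSEQ_divide_realpow_zero | simp)+
  show "(\<lambda>m. dyadic_point t T m (j m)) \<longlonglongrightarrow> s"
  proof (rule tendsto_sandwich[OF _ _ lim tendsto_const])
    show "\<forall>\<^sub>F m in sequentially. s - (T - t) / 2^m \<le> dyadic_point t T m (j m)"
      using bounds by (intro always_eventually) blast
    show "\<forall>\<^sub>F m in sequentially. dyadic_point t T m (j m) \<le> s"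
      using bounds by (intro always_eventually) blast
  qed
qed

lemma std_BM_exp_sup_dominated:
  fixes W :: "real \<Rightarrow> 'a \<Rightarrow> real"
  assumes BM: "std_BM M T W" and sg: "sg = 1 \<or> sg = -1" and mu: "0 \<le> mu" and t: "0 \<le> t" "t \<le> T"
  obtains L where "L \<in> borel_measurable M" "(\<integral>\<^sup>+\<omega>. L \<omega> \<partial>M) \<le> ennreal (BM_exp_max_bound mu T)"
    "\<And>\<omega> s. \<omega> \<in> space M \<Longrightarrow> s \<in> {t..T} \<Longrightarrow> ennreal (exp (mu * (sg * (W s \<omega> - W t \<omega>)))) \<le> L \<omega>"
proof (cases "t = T")
  case True
  interpret prob_space M
    using BM by (rule std_BM_prob_space)
  have "(\<integral>\<^sup>+\<omega>. 1 \<partial>M) \<le> ennreal (BM_exp_max_bound mu T)"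
    using BM_exp_max_bound_ge_1[OF mu] t by (simp add: emeasure_space_1)
  with True show ?thesis
    by (intro that[of "\<lambda>_. 1"]) auto
next
  case False
  with t have tT: "t < T" by simp
  let ?d = "dyadic_point t T"
  define F where "F m \<omega> = ennreal (exp (mu * Max ((\<lambda>j. sg * (W (?d m j) \<omega> - W (?d m 0) \<omega>)) ` {..2^m})))" for m \<omega>
  have "W (?d m j) \<in> borel_measurable M" if "j \<le> 2^m" for m j
    using dyadic_point_in_Icc[OF t(2) that] t by (intro std_BM_borel_measurable[OF BM]) auto
  then have "(\<lambda>\<omega>. Max ((\<lambda>j. sg * (W (?d m j) \<omega> - W (?d m 0) \<omega>)) ` {..2^m})) \<in> borel_measurable M" for m
    by (intro borel_measurable_Max) auto
  then have F_meas: "F m \<in> borel_measurable M" for m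
    unfolding F_def by measurable
  have F_int: "(\<integral>\<^sup>+\<omega>. F m \<omega> \<partial>M) \<le> ennreal (BM_exp_max_bound mu T)" for m
    unfolding F_def using dyadic_point_in_Icc[OF t(2), of "2^m" m] t
    by (intro std_BM_grid_nn_integral_exp_max[OF BM sg mu strict_mono_on_dyadic_point[OF tT]])
      (auto simp: dyadic_point_def)
  \<comment> \<open>Fatou bounds the integral of L; path continuity makes L dominate every point of [t, T].\<close>
  define L where "L \<omega> = liminf (\<lambda>m. F m \<omega>)" for \<omega>
  have "(\<integral>\<^sup>+\<omega>. L \<omega> \<partial>M) \<le> liminf (\<lambda>m. \<integral>\<^sup>+\<omega>. F m \<omega> \<partial>M)"
    unfolding L_def by (rule nn_integral_liminf[OF F_meas])
  also have "\<dots> \<le> ennreal (BM_exp_max_bound mu T)"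
    using F_int by (intro Liminf_le[OF sequentially_bot always_eventually]) simp
  finally have L_int: "(\<integral>\<^sup>+\<omega>. L \<omega> \<partial>M) \<le> ennreal (BM_exp_max_bound mu T)" .
  have L_meas: "L \<in> borel_measurable M"
    unfolding L_def using F_meas by measurable
  have L_dominates: "ennreal (exp (mu * (sg * (W s \<omega> - W t \<omega>)))) \<le> L \<omega>"
    if \<omega>: "\<omega> \<in> space M" and s: "s \<in> {t..T}" for \<omega> s
  proof -
    obtain j where j: "\<And>m. j m \<le> 2^m" and lim: "(\<lambda>m. ?d m (j m)) \<longlonglongrightarrow> s"
      using dyadic_point_approx[OF tT s] by blast
    define f where "f r = exp (mu * (sg * (W r \<omega> - W t \<omega>)))" for r
    have "continuous_on {0..T} (\<lambda>r. W r \<omega>)"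
      using BM \<omega> unfolding std_BM_def by blast
    then have "continuous_on {t..T} (\<lambda>r. W r \<omega>)"
      by (rule continuous_on_subset) (use t in auto)
    then have "continuous_on {t..T} f"
      unfolding f_def by (intro continuous_intros)
    moreover have "\<forall>m. ?d m (j m) \<in> {t..T}"
      using dyadic_point_in_Icc[OF t(2) j] by blast
    ultimately have "(\<lambda>m. f (?d m (j m))) \<longlonglongrightarrow> f s"
      by (intro continuous_on_tendsto_compose[OF _ lim s always_eventually])
    then have "ennreal (f s) = liminf (\<lambda>m. ennreal (f (?d m (j m))))"
      by (intro lim_imp_Liminf[symmetric] tendsto_ennrealI) simp_all
    also have "\<dots> \<le> L \<omega>"
      unfolding L_def
    proof (intro Liminf_mono always_eventually allI)
      fix m
      have "sg * (W (?d m (j m)) \<omega> - W (?d m 0) \<omega>) \<le> Max ((\<lambda>j. sg * (W (?d m j) \<omega> - W (?d m 0) \<omega>)) ` {..2^m})"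
        using j by (intro Max_ge) auto
      then show "ennreal (f (?d m (j m))) \<le> F m \<omega>"
        unfolding F_def f_def using mu by (simp add: mult_left_mono dyadic_point_def)
    qed
    finally show ?thesis
      by (simp add: f_def)
  qed
  from L_meas L_int L_dominates show thesis
    by (rule that)
qed

lemma std_BM_exp_abs_sup_dominated:
  fixes W :: "real \<Rightarrow> 'a \<Rightarrow> real"
  assumes BM: "std_BM M T W" and mu: "0 \<le> mu" and t: "0 \<le> t" "t \<le> T"
  obtains L where "L \<in> borel_measurable M" "(\<integral>\<^sup>+\<omega>. L \<omega> \<partial>M) \<le> 2 * ennreal (BM_exp_max_bound mu T)"
    "\<And>\<omega> s. \<omega> \<in> space M \<Longrightarrow> s \<in> {t..T} \<Longrightarrow> ennreal (exp (mu * \<bar>W s \<omega> - W t \<omega>\<bar>)) \<le> L \<omega>"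
proof -
  obtain Lp where Lp: "Lp \<in> borel_measurable M" "(\<integral>\<^sup>+\<omega>. Lp \<omega> \<partial>M) \<le> ennreal (BM_exp_max_bound mu T)"
    "\<And>\<omega> s. \<omega> \<in> space M \<Longrightarrow> s \<in> {t..T} \<Longrightarrow> ennreal (exp (mu * (1 * (W s \<omega> - W t \<omega>)))) \<le> Lp \<omega>"
    using std_BM_exp_sup_dominated[OF BM _ mu t] by blast
  obtain Lm where Lm: "Lm \<in> borel_measurable M" "(\<integral>\<^sup>+\<omega>. Lm \<omega> \<partial>M) \<le> ennreal (BM_exp_max_bound mu T)"
    "\<And>\<omega> s. \<omega> \<in> space M \<Longrightarrow> s \<in> {t..T} \<Longrightarrow> ennreal (exp (mu * (-1 * (W s \<omega> - W t \<omega>)))) \<le> Lm \<omega>"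
    using std_BM_exp_sup_dominated[OF BM _ mu t] by blast
  show thesis
  proof (rule that[of "\<lambda>\<omega>. Lp \<omega> + Lm \<omega>"])
    show "(\<lambda>\<omega>. Lp \<omega> + Lm \<omega>) \<in> borel_measurable M"
      using Lp(1) Lm(1) by measurable
    show "(\<integral>\<^sup>+\<omega>. Lp \<omega> + Lm \<omega> \<partial>M) \<le> 2 * ennreal (BM_exp_max_bound mu T)"
      using Lp(1,2) Lm(1,2) add_mono[OF Lp(2) Lm(2)] by (simp add: nn_integral_add mult_2)
  next
    fix \<omega> s assume "\<omega> \<in> space M" "s \<in> {t..T}"
    have "exp (mu * \<bar>W s \<omega> - W t \<omega>\<bar>) \<le> exp (mu * (W s \<omega> - W t \<omega>)) + exp (mu * (- (W s \<omega> - W t \<omega>)))"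
      by (cases "0 \<le> W s \<omega> - W t \<omega>") (simp_all add: add_increasing add_increasing2)
    then have "ennreal (exp (mu * \<bar>W s \<omega> - W t \<omega>\<bar>))
        \<le> ennreal (exp (mu * (W s \<omega> - W t \<omega>))) + ennreal (exp (mu * (- (W s \<omega> - W t \<omega>))))"
      by (simp add: ennreal_plus[symmetric] del: ennreal_plus)
    also have "\<dots> \<le> Lp \<omega> + Lm \<omega>"
      using Lp(3) Lm(3) \<open>\<omega> \<in> space M\<close> \<open>s \<in> {t..T}\<close> by (intro add_mono) auto
    finally show "ennreal (exp (mu * \<bar>W s \<omega> - W t \<omega>\<bar>)) \<le> Lp \<omega> + Lm \<omega>" .
  qed
qed

section \<open>Pathwise estimates for the price process\<close>

lemma abs_exp_mult_minus_one_le: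
  fixes x c :: real
  assumes "0 \<le> c" "c \<le> 1"
  shows "\<bar>exp (x * c) - 1\<bar> \<le> \<bar>exp x - 1\<bar>"
proof (cases "0 \<le> x")
  case True
  then have "0 \<le> x * c" "x * c \<le> x"
    using assms by (simp_all add: mult_left_le)
  then show ?thesis by simp
next
  case False
  then have "x * c \<le> 0" "x \<le> x * c"
    using assms by (simp_all add: mult_nonpos_nonneg mult_left_le_one_le mult_le_cancel_left1)
  then show ?thesis by simp
qed

lemma abs_diff_mult_exp_le:
  fixes a a' e e' c Z :: real
  assumes a: "0 \<le> a" and c: "0 \<le> c" "c \<le> 1"
  shows "\<bar>a * exp (e * c + Z) - a' * exp (e' * c + Z)\<bar>
    \<le> exp Z * exp \<bar>e'\<bar> * (\<bar>a - a'\<bar> + a * \<bar>exp (e - e') - 1\<bar>)"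
proof -
  have "a * exp (e * c + Z) - a' * exp (e' * c + Z)
      = exp Z * exp (e' * c) * ((a - a') + a * (exp ((e - e') * c) - 1))"
    by (simp add: exp_add[symmetric] algebra_simps)
  also have "\<bar>\<dots>\<bar> \<le> exp Z * exp \<bar>e'\<bar> * (\<bar>a - a'\<bar> + a * \<bar>exp (e - e') - 1\<bar>)"
  proof -
    have "\<bar>(a - a') + a * (exp ((e - e') * c) - 1)\<bar> \<le> \<bar>a - a'\<bar> + a * \<bar>exp ((e - e') * c) - 1\<bar>"
      using a by (simp add: abs_triangle_ineq[THEN order_trans] abs_mult)
    also have "\<dots> \<le> \<bar>a - a'\<bar> + a * \<bar>exp (e - e') - 1\<bar>"
      using abs_exp_mult_minus_one_le[OF c, of "e - e'"] a by (simp add: mult_left_mono)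
    finally have "\<bar>(a - a') + a * (exp ((e - e') * c) - 1)\<bar> \<le> \<bar>a - a'\<bar> + a * \<bar>exp (e - e') - 1\<bar>" .
    moreover have "e' * c \<le> \<bar>e'\<bar>"
      using c by (metis abs_ge_self abs_mult abs_of_nonneg mult.commute mult_left_le order_trans abs_ge_zero)
    ultimately show ?thesis
      by (simp add: abs_mult mult_mono)
  qed
  finally show ?thesis .
qed

lemma increment_minus_exp_kernel_integral_le:
  fixes B :: "real \<Rightarrow> real"
  assumes B: "continuous_on {t..r} B" and tr: "t \<le> r" and k: "0 \<le> k"
    and X: "\<And>s. s \<in> {t..r} \<Longrightarrow> \<bar>B s - B t\<bar> \<le> X"
  shows "(B r - B t) - k * integral {t..r} (\<lambda>s. exp (- k * (r - s)) * (B s - B t)) \<le> (1 + k * (r - t)) * X"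
proof -
  have "norm (integral {t..r} (\<lambda>s. exp (- k * (r - s)) * (B s - B t))) \<le> X * (r - t)"
  proof (rule integral_bound[OF tr])
    show "continuous_on {t..r} (\<lambda>s. exp (- k * (r - s)) * (B s - B t))"
      by (intro continuous_intros B)
  next
    fix s assume s: "s \<in> {t..r}"
    then have "exp (- k * (r - s)) \<le> 1"
      using k by (simp add: mult_nonneg_nonneg)
    then show "norm (exp (- k * (r - s)) * (B s - B t)) \<le> X"
      using X[OF s] mult_mono[of "exp (- k * (r - s))" 1 "\<bar>B s - B t\<bar>" X] by (simp add: abs_mult)
  qed
  then have "k * - integral {t..r} (\<lambda>s. exp (- k * (r - s)) * (B s - B t)) \<le> k * (X * (r - t))"
    using k by (intro mult_left_mono) auto
  moreover have "B r - B t \<le> X"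
    using X[of r] tr by simp
  ultimately show ?thesis
    by (simp add: algebra_simps)
qed

lemma powr_add_le:
  fixes x y p :: real
  assumes "0 \<le> x" "0 \<le> y" "0 \<le> p"
  shows "(x + y) powr p \<le> 2 powr p * (x powr p + y powr p)"
proof -
  have "(x + y) powr p \<le> (2 * max x y) powr p"
    using assms by (intro powr_mono2) auto
  also have "\<dots> = 2 powr p * max x y powr p"
    using assms by (simp add: powr_mult)
  also have "\<dots> \<le> 2 powr p * (x powr p + y powr p)"
    by (intro mult_left_mono) (auto simp: max_def)
  finally show ?thesis .
qed

lemma exp_add_le_exp_double: "exp (x + y) \<le> exp (2 * x) + exp (2 * y)" for x y :: real
proof (cases "x \<le> y")
  case True
  then have "exp (x + y) \<le> exp (2 * y)"
    by simp
  then show ?thesis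
    using exp_gt_zero[of "2 * x"] by linarith
next
  case False
  then have "exp (x + y) \<le> exp (2 * x)"
    by simp
  then show ?thesis
    using exp_gt_zero[of "2 * y"] by linarith
qed

lemma S_proc_diff_le:
  fixes W1 W2 :: "real \<Rightarrow> 'a \<Rightarrow> real"
  assumes cont: "continuous_on {0..T} (\<lambda>s. W1 s \<omega>)" "continuous_on {0..T} (\<lambda>s. W2 s \<omega>)"
    and tr: "0 \<le> t" "t \<le> r" "r \<le> T" and a: "0 \<le> a" and k: "0 \<le> k"
    and sig: "0 \<le> sig1" "0 \<le> sig2" and rho: "-1 \<le> rho" "rho \<le> 1"
    and X1: "\<And>s. s \<in> {t..T} \<Longrightarrow> \<bar>W1 s \<omega> - W1 t \<omega>\<bar> \<le> X1"
    and X2: "\<And>s. s \<in> {t..T} \<Longrightarrow> \<bar>W2 s \<omega> - W2 t \<omega>\<bar> \<le> X2"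
  shows "\<bar>S_proc mu1 sig1 k sig2 rho W1 W2 t a e r \<omega> - S_proc mu1 sig1 k sig2 rho W1 W2 t a' e' r \<omega>\<bar>
    \<le> exp (\<bar>mu1 - sig1^2 / 2\<bar> * T + (sig1 + sig2 * (1 + k * T)) * (X1 + X2)) * exp \<bar>e'\<bar>
        * (\<bar>a - a'\<bar> + a * \<bar>exp (e - e') - 1\<bar>)"
proof -
  define q where "q = sqrt (1 - rho^2)"
  have q: "0 \<le> q" "q \<le> 1"
    using rho by (auto simp: q_def abs_square_le_1)
  define B where "B s = rho * W1 s \<omega> + q * W2 s \<omega>" for s
  define I where "I = integral {t..r} (\<lambda>s. exp (- k * (r - s)) * (B s - B t))"
  define Y where "Y = (mu1 - sig1^2 / 2) * (r - t) + sig1 * (W1 r \<omega> - W1 t \<omega>) + sig2 * ((B r - B t) - k * I)"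
  have S_eq: "S_proc mu1 sig1 k sig2 rho W1 W2 t x y r \<omega> = x * exp (y * exp (- k * (r - t)) + Y)" for x y
    unfolding S_proc_def A_proc_def eps_proc_def Let_def Y_def I_def B_def q_def
    by (simp add: exp_add[symmetric] algebra_simps)
  have X_nonneg: "0 \<le> X1" "0 \<le> X2"
    using X1[of t] X2[of t] tr by auto
  have B_incr: "\<bar>B s - B t\<bar> \<le> X1 + X2" if "s \<in> {t..T}" for s
  proof -
    have "B s - B t = rho * (W1 s \<omega> - W1 t \<omega>) + q * (W2 s \<omega> - W2 t \<omega>)"
      by (simp add: B_def algebra_simps)
    then have "\<bar>B s - B t\<bar> \<le> \<bar>rho\<bar> * \<bar>W1 s \<omega> - W1 t \<omega>\<bar> + q * \<bar>W2 s \<omega> - W2 t \<omega>\<bar>"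
      using q by (simp add: abs_triangle_ineq[THEN order_trans] abs_mult)
    also have "\<dots> \<le> 1 * X1 + 1 * X2"
      using X1[OF that] X2[OF that] rho q by (intro add_mono mult_mono) auto
    finally show ?thesis by simp
  qed
  have "continuous_on {t..r} (\<lambda>s. W1 s \<omega>)" "continuous_on {t..r} (\<lambda>s. W2 s \<omega>)"
    using cont tr by (auto elim!: continuous_on_subset)
  then have "continuous_on {t..r} B"
    unfolding B_def by (intro continuous_intros)
  then have noise: "(B r - B t) - k * I \<le> (1 + k * (r - t)) * (X1 + X2)"
    unfolding I_def using tr B_incr by (intro increment_minus_exp_kernel_integral_le k) auto
  have "(mu1 - sig1^2 / 2) * (r - t) \<le> \<bar>mu1 - sig1^2 / 2\<bar> * T"
    using tr by (intro mult_mono) auto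
  moreover have "sig1 * (W1 r \<omega> - W1 t \<omega>) \<le> sig1 * (X1 + X2)"
    using X1[of r] X_nonneg tr sig by (intro mult_left_mono) auto
  moreover have "sig2 * ((B r - B t) - k * I) \<le> sig2 * ((1 + k * T) * (X1 + X2))"
    using noise tr k X_nonneg sig
    by (intro mult_left_mono order.trans[OF noise] mult_right_mono) (auto intro: mult_left_mono)
  ultimately have Y_le: "Y \<le> \<bar>mu1 - sig1^2 / 2\<bar> * T + (sig1 + sig2 * (1 + k * T)) * (X1 + X2)"
    unfolding Y_def by (simp add: algebra_simps)
  have "\<bar>S_proc mu1 sig1 k sig2 rho W1 W2 t a e r \<omega> - S_proc mu1 sig1 k sig2 rho W1 W2 t a' e' r \<omega>\<bar>
      \<le> exp Y * exp \<bar>e'\<bar> * (\<bar>a - a'\<bar> + a * \<bar>exp (e - e') - 1\<bar>)"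
    unfolding S_eq using k tr by (intro abs_diff_mult_exp_le a) auto
  also have "\<dots> \<le> exp (\<bar>mu1 - sig1^2 / 2\<bar> * T + (sig1 + sig2 * (1 + k * T)) * (X1 + X2)) * exp \<bar>e'\<bar>
        * (\<bar>a - a'\<bar> + a * \<bar>exp (e - e') - 1\<bar>)"
    using Y_le a by (intro mult_right_mono) auto
  finally show ?thesis .
qed

lemma continuous_on_attains_max_abs_increment:
  fixes f :: "real \<Rightarrow> real"
  assumes "continuous_on {t..T} f" "t \<le> T"
  obtains s where "s \<in> {t..T}" "\<And>s'. s' \<in> {t..T} \<Longrightarrow> \<bar>f s' - f t\<bar> \<le> \<bar>f s - f t\<bar>"
proof -
  have "continuous_on {t..T} (\<lambda>s. \<bar>f s - f t\<bar>)"
    using assms(1) by (intro continuous_intros)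
  from continuous_attains_sup[OF compact_Icc _ this] assms(2) that show thesis
    by auto
qed

lemma SUP_S_proc_diff_powr_le:
  fixes W1 W2 :: "real \<Rightarrow> 'a \<Rightarrow> real" and L1 L2 :: ennreal
  assumes cont: "continuous_on {0..T} (\<lambda>s. W1 s \<omega>)" "continuous_on {0..T} (\<lambda>s. W2 s \<omega>)"
    and t: "0 \<le> t" "t \<le> T" and a: "0 \<le> a" and k: "0 \<le> k"
    and sig: "0 \<le> sig1" "0 \<le> sig2" and rho: "-1 \<le> rho" "rho \<le> 1" and p: "0 \<le> p"
    and L1: "\<And>s. s \<in> {t..T} \<Longrightarrow> ennreal (exp (2 * p * (sig1 + sig2 * (1 + k * T)) * \<bar>W1 s \<omega> - W1 t \<omega>\<bar>)) \<le> L1"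
    and L2: "\<And>s. s \<in> {t..T} \<Longrightarrow> ennreal (exp (2 * p * (sig1 + sig2 * (1 + k * T)) * \<bar>W2 s \<omega> - W2 t \<omega>\<bar>)) \<le> L2"
  shows "(\<Squnion>r\<in>{t..T}. ennreal (\<bar>S_proc mu1 sig1 k sig2 rho W1 W2 t a e r \<omega>
                   - S_proc mu1 sig1 k sig2 rho W1 W2 t a' e' r \<omega>\<bar> powr p))
    \<le> ennreal (2 powr p * exp (p * (\<bar>mu1 - sig1^2 / 2\<bar> * T)) * exp (p * \<bar>e'\<bar>)
        * (\<bar>a - a'\<bar> powr p + a powr p * \<bar>exp (e - e') - 1\<bar> powr p)) * (L1 + L2)"
proof (rule SUP_least)
  fix r assume r: "r \<in> {t..T}"
  define c0 where "c0 = \<bar>mu1 - sig1^2 / 2\<bar> * T"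
  define c1 where "c1 = sig1 + sig2 * (1 + k * T)"
  define D where "D = \<bar>a - a'\<bar> + a * \<bar>exp (e - e') - 1\<bar>"
  define R where "R = \<bar>a - a'\<bar> powr p + a powr p * \<bar>exp (e - e') - 1\<bar> powr p"
  define Q where "Q = 2 powr p * exp (p * c0) * exp (p * \<bar>e'\<bar>) * R"
  obtain s1 where s1: "s1 \<in> {t..T}" "\<And>s. s \<in> {t..T} \<Longrightarrow> \<bar>W1 s \<omega> - W1 t \<omega>\<bar> \<le> \<bar>W1 s1 \<omega> - W1 t \<omega>\<bar>"
    using continuous_on_attains_max_abs_increment[OF continuous_on_subset[OF cont(1)] t(2)] t by auto
  obtain s2 where s2: "s2 \<in> {t..T}" "\<And>s. s \<in> {t..T} \<Longrightarrow> \<bar>W2 s \<omega> - W2 t \<omega>\<bar> \<le> \<bar>W2 s2 \<omega> - W2 t \<omega>\<bar>"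
    using continuous_on_attains_max_abs_increment[OF continuous_on_subset[OF cont(2)] t(2)] t by auto
  define X1 where "X1 = \<bar>W1 s1 \<omega> - W1 t \<omega>\<bar>"
  define X2 where "X2 = \<bar>W2 s2 \<omega> - W2 t \<omega>\<bar>"
  have "\<bar>S_proc mu1 sig1 k sig2 rho W1 W2 t a e r \<omega> - S_proc mu1 sig1 k sig2 rho W1 W2 t a' e' r \<omega>\<bar>
      \<le> exp (c0 + c1 * (X1 + X2)) * exp \<bar>e'\<bar> * D"
    unfolding c0_def c1_def D_def X1_def X2_def
    using cont t r a k sig rho s1(2) s2(2) by (intro S_proc_diff_le) auto
  then have "\<bar>S_proc mu1 sig1 k sig2 rho W1 W2 t a e r \<omega> - S_proc mu1 sig1 k sig2 rho W1 W2 t a' e' r \<omega>\<bar> powr p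
      \<le> (exp (c0 + c1 * (X1 + X2)) * exp \<bar>e'\<bar> * D) powr p"
    using p by (intro powr_mono2) auto
  also have "\<dots> = exp (c0 + c1 * (X1 + X2)) powr p * exp \<bar>e'\<bar> powr p * D powr p"
    using a by (simp add: D_def powr_mult)
  also have "\<dots> = exp (p * c0) * exp (p * c1 * X1 + p * c1 * X2) * exp (p * \<bar>e'\<bar>) * D powr p"
    by (simp add: exp_powr_real exp_add[symmetric] algebra_simps)
  also have "\<dots> \<le> exp (p * c0) * (exp (2 * p * c1 * X1) + exp (2 * p * c1 * X2)) * exp (p * \<bar>e'\<bar>) * (2 powr p * R)"
  proof (intro mult_mono mult_left_mono)
    show "exp (p * c1 * X1 + p * c1 * X2) \<le> exp (2 * p * c1 * X1) + exp (2 * p * c1 * X2)"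
      using exp_add_le_exp_double[of "p * c1 * X1" "p * c1 * X2"] by (simp add: mult.assoc)
    have "D powr p \<le> 2 powr p * (\<bar>a - a'\<bar> powr p + (a * \<bar>exp (e - e') - 1\<bar>) powr p)"
      unfolding D_def using a p by (intro powr_add_le) auto
    then show "D powr p \<le> 2 powr p * R"
      using a by (simp add: R_def powr_mult)
  qed (auto simp: R_def)
  also have "\<dots> = Q * (exp (2 * p * c1 * X1) + exp (2 * p * c1 * X2))"
    by (simp add: Q_def algebra_simps)
  finally have "ennreal (\<bar>S_proc mu1 sig1 k sig2 rho W1 W2 t a e r \<omega> - S_proc mu1 sig1 k sig2 rho W1 W2 t a' e' r \<omega>\<bar> powr p)
      \<le> ennreal (Q * (exp (2 * p * c1 * X1) + exp (2 * p * c1 * X2)))"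
    by (rule ennreal_leI)
  also have "\<dots> = ennreal Q * (ennreal (exp (2 * p * c1 * X1)) + ennreal (exp (2 * p * c1 * X2)))"
    by (simp add: Q_def R_def ennreal_mult ennreal_plus)
  also have "\<dots> \<le> ennreal Q * (L1 + L2)"
    using L1[OF s1(1)] L2[OF s2(1)] by (intro mult_left_mono add_mono) (auto simp: c1_def X1_def X2_def)
  finally show "ennreal (\<bar>S_proc mu1 sig1 k sig2 rho W1 W2 t a e r \<omega> - S_proc mu1 sig1 k sig2 rho W1 W2 t a' e' r \<omega>\<bar> powr p)
      \<le> ennreal (2 powr p * exp (p * (\<bar>mu1 - sig1^2 / 2\<bar> * T)) * exp (p * \<bar>e'\<bar>)
        * (\<bar>a - a'\<bar> powr p + a powr p * \<bar>exp (e - e') - 1\<bar> powr p)) * (L1 + L2)"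
    by (simp add: Q_def R_def c0_def)
qed

lemma nn_integral_SUP_S_proc_diff_powr_le:
  fixes W1 W2 :: "real \<Rightarrow> 'a \<Rightarrow> real"
  assumes BM1: "std_BM M T W1" and BM2: "std_BM M T W2" and t: "0 \<le> t" "t \<le> T"
    and a: "0 \<le> a" and k: "0 \<le> k" and sig: "0 \<le> sig1" "0 \<le> sig2"
    and rho: "-1 \<le> rho" "rho \<le> 1" and p: "0 \<le> p"
  shows "(\<integral>\<^sup>+ \<omega>. (\<Squnion>r\<in>{t..T}. ennreal (\<bar>S_proc mu1 sig1 k sig2 rho W1 W2 t a e r \<omega>
                   - S_proc mu1 sig1 k sig2 rho W1 W2 t a' e' r \<omega>\<bar> powr p)) \<partial>M)
    \<le> ennreal (4 * BM_exp_max_bound (2 * p * (sig1 + sig2 * (1 + k * T))) T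
        * 2 powr p * exp (p * (\<bar>mu1 - sig1^2 / 2\<bar> * T)) * exp (p * \<bar>e'\<bar>)
        * (\<bar>a - a'\<bar> powr p + a powr p * \<bar>exp (e - e') - 1\<bar> powr p))"
proof -
  define mu where "mu = 2 * p * (sig1 + sig2 * (1 + k * T))"
  define K where "K = BM_exp_max_bound mu T"
  define Q where "Q = 2 powr p * exp (p * (\<bar>mu1 - sig1^2 / 2\<bar> * T)) * exp (p * \<bar>e'\<bar>)
    * (\<bar>a - a'\<bar> powr p + a powr p * \<bar>exp (e - e') - 1\<bar> powr p)"
  have mu: "0 \<le> mu"
    using p k sig t by (simp add: mu_def)
  obtain L1 where L1: "L1 \<in> borel_measurable M" "(\<integral>\<^sup>+\<omega>. L1 \<omega> \<partial>M) \<le> 2 * ennreal K"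
    "\<And>\<omega> s. \<omega> \<in> space M \<Longrightarrow> s \<in> {t..T} \<Longrightarrow> ennreal (exp (mu * \<bar>W1 s \<omega> - W1 t \<omega>\<bar>)) \<le> L1 \<omega>"
    using std_BM_exp_abs_sup_dominated[OF BM1 mu t] unfolding K_def by blast
  obtain L2 where L2: "L2 \<in> borel_measurable M" "(\<integral>\<^sup>+\<omega>. L2 \<omega> \<partial>M) \<le> 2 * ennreal K"
    "\<And>\<omega> s. \<omega> \<in> space M \<Longrightarrow> s \<in> {t..T} \<Longrightarrow> ennreal (exp (mu * \<bar>W2 s \<omega> - W2 t \<omega>\<bar>)) \<le> L2 \<omega>"
    using std_BM_exp_abs_sup_dominated[OF BM2 mu t] unfolding K_def by blast
  have "(\<integral>\<^sup>+ \<omega>. (\<Squnion>r\<in>{t..T}. ennreal (\<bar>S_proc mu1 sig1 k sig2 rho W1 W2 t a e r \<omega>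
                   - S_proc mu1 sig1 k sig2 rho W1 W2 t a' e' r \<omega>\<bar> powr p)) \<partial>M)
      \<le> (\<integral>\<^sup>+\<omega>. ennreal Q * (L1 \<omega> + L2 \<omega>) \<partial>M)"
  proof (intro nn_integral_mono)
    fix \<omega> assume "\<omega> \<in> space M"
    with BM1 BM2 L1(3) L2(3) t a k sig rho p
    show "(\<Squnion>r\<in>{t..T}. ennreal (\<bar>S_proc mu1 sig1 k sig2 rho W1 W2 t a e r \<omega>
                   - S_proc mu1 sig1 k sig2 rho W1 W2 t a' e' r \<omega>\<bar> powr p)) \<le> ennreal Q * (L1 \<omega> + L2 \<omega>)"
      unfolding Q_def mu_def std_BM_def by (intro SUP_S_proc_diff_powr_le) auto
  qed
  also have "\<dots> = ennreal Q * ((\<integral>\<^sup>+\<omega>. L1 \<omega> \<partial>M) + (\<integral>\<^sup>+\<omega>. L2 \<omega> \<partial>M))"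
    using L1(1) L2(1) by (simp add: nn_integral_cmult nn_integral_add)
  also have "\<dots> \<le> ennreal Q * (2 * ennreal K + 2 * ennreal K)"
    using L1(2) L2(2) by (intro mult_left_mono add_mono) auto
  also have "2 * ennreal K + 2 * ennreal K = ennreal (4 * K)"
    using BM_exp_max_bound_ge_1[OF mu, of T] t
    by (simp add: K_def ennreal_mult distrib_right[symmetric] del: ennreal_plus)
  also have "ennreal Q * ennreal (4 * K) = ennreal (4 * K * Q)"
    using BM_exp_max_bound_ge_1[OF mu, of T] t by (simp add: K_def Q_def ennreal_mult[symmetric] mult_ac)
  finally show ?thesis
    by (simp add: K_def Q_def mu_def mult_ac)
qed

theorem lemmaA2:
  fixes M :: "'w measure" and W1 W2 :: "real \<Rightarrow> 'w \<Rightarrow> real"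
    and T mu1 sig1 k sig2 rho Q0 :: real
  assumes "T > 0" and "indep_BMs M T W1 W2"
    and "mu1 > 0" and "sig1 > 0" and "k > 0" and "sig2 > 0"
    and "-1 \<le> rho" and "rho \<le> 1" and "0 < Q0"
  shows "\<forall>p::real. p \<ge> 1 \<longrightarrow> (\<exists>C>0. \<forall>t\<in>{0..T}. \<forall>a e q a' e' q'.
     (a, e, q) \<in> domO Q0 \<longrightarrow> (a', e', q') \<in> domO Q0 \<longrightarrow>
     (\<integral>\<^sup>+ \<omega>. (\<Squnion>r\<in>{t..T}. ennreal (\<bar>S_proc mu1 sig1 k sig2 rho W1 W2 t a e r \<omega>
                   - S_proc mu1 sig1 k sig2 rho W1 W2 t a' e' r \<omega>\<bar> powr p)) \<partial>M)
       \<le> ennreal (C * exp (p * \<bar>e'\<bar>) *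
            (\<bar>a - a'\<bar> powr p + a powr p * \<bar>exp (e - e') - 1\<bar> powr p)))"
proof (intro allI impI)
  fix p :: real assume p: "1 \<le> p"
  have BM1: "std_BM M T W1" and BM2: "std_BM M T W2"
    using assms(2) unfolding indep_BMs_def by auto
  define C where "C = 4 * BM_exp_max_bound (2 * p * (sig1 + sig2 * (1 + k * T))) T
    * 2 powr p * exp (p * (\<bar>mu1 - sig1^2 / 2\<bar> * T))"
  have "0 < C"
    using BM_exp_max_bound_ge_1[of "2 * p * (sig1 + sig2 * (1 + k * T))" T] assms p by (simp add: C_def)
  moreover have "(\<integral>\<^sup>+ \<omega>. (\<Squnion>r\<in>{t..T}. ennreal (\<bar>S_proc mu1 sig1 k sig2 rho W1 W2 t a e r \<omega>
                   - S_proc mu1 sig1 k sig2 rho W1 W2 t a' e' r \<omega>\<bar> powr p)) \<partial>M)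
       \<le> ennreal (C * exp (p * \<bar>e'\<bar>) * (\<bar>a - a'\<bar> powr p + a powr p * \<bar>exp (e - e') - 1\<bar> powr p))"
    if "t \<in> {0..T}" "(a, e, q) \<in> domO Q0" for t a e q a' e'
    using nn_integral_SUP_S_proc_diff_powr_le[OF BM1 BM2] that assms p
    unfolding C_def domO_def by simp
  ultimately show "\<exists>C>0. \<forall>t\<in>{0..T}. \<forall>a e q a' e' q'.
     (a, e, q) \<in> domO Q0 \<longrightarrow> (a', e', q') \<in> domO Q0 \<longrightarrow>
     (\<integral>\<^sup>+ \<omega>. (\<Squnion>r\<in>{t..T}. ennreal (\<bar>S_proc mu1 sig1 k sig2 rho W1 W2 t a e r \<omega>
                   - S_proc mu1 sig1 k sig2 rho W1 W2 t a' e' r \<omega>\<bar> powr p)) \<partial>M)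
       \<le> ennreal (C * exp (p * \<bar>e'\<bar>) *
            (\<bar>a - a'\<bar> powr p + a powr p * \<bar>exp (e - e') - 1\<bar> powr p))"
    by blast
qed

end
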